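(* Let $I$ be a set of players, for each $i\in I$ let $G_i$ be a compact convex subset of a Hausdorff locally convex topological vector space, and let $G=(G_i,P_i,Q_i)_{i\in I}$ be a general qualitative game satisfying property $T$, where $P_i,Q_i:\prod_{j\in I}G_j\to 2^{G_i}$ satisfy for each $i\in I$: (i) $y_i\in Q_i(y_i,x_{-i})$ for each $y_i\in G_i$ and each $x_{-i}\in G_{-i}$; (ii) $Q_i$ has convex closed values; (iii) $P_i$ has convex values; (iv) $x_i\notin P_i(x)$ for each $x\in\prod_{j\in I}G_j$; (v) $P_i^{-1}(y_i)=\{x\in\prod_{j\in I}G_j: y_i\in P_i(x)\}$ is open in $\prod_{j\in I}G_j$ for each $y_i\in G_i$. Then: (a) if $G\to^* H$ and there exist $i\in I$ and $x_i,y_i\in G_i$ with $y_i\succ_H x_i$, then there exists $x_i^*\in H_i$ such that $x_i^*\succ_H x_i$ and $z_i\not\succ_H x_i^*$ for all $z_i\in G_i$; (b) if $M$ is a nonempty maximal $(\to^* )$-reduction of $G$, then $M$ is the unique maximal $(\to^* )$-reduction of $G$.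
   Context: $I$ is a nonempty set; $X=\prod_{j\in I}G_j$, $G_{-i}=\prod_{j\ne i}G_j$, $x=(x_i,x_{-i})$. A general qualitative game is $G=(G_i,P_i,Q_i)_{i\in I}$ with correspondences $P_i,Q_i:X\to 2^{G_i}$. It satisfies property $T$ if for each $i$ and each $x\in X$: $P_i(x)\subseteq Q_i(x)$, and $y_i\in P_i(x)$ implies $Q_i(y_i,x_{-i})\subseteq P_i(x)$. A pairing of $G$ is a family $H=(H_i)_{i\in I}$ with $H_i\subseteq G_i$ (the $P_i$ restricted to $\prod_jH_j$); $H_{-i}=\prod_{j\ne i}H_j$; $H$ is nonempty if every $H_i\neq\emptyset$. For $x_i,y_i\in G_i$: $y_i\succ_H x_i$ iff $H_{-i}\neq\emptyset$ and $y_i\in P_i(x_i,x_{-i})$ for all $x_{-i}\in H_{-i}$. For pairings $R,S$ with $S_i\subseteq R_i$ for all $i$: $R\to S$ means for every $i$ and $x_i\in R_i\setminus S_i$, $\bigcap_{x_{-i}\in R_{-i}}P_i(x_i,x_{-i})\ne\emptyset$; it is fast if moreover for every $i$ and $x_i\in R_i$, $\bigcap_{x_{-i}\in R_{-i}}P_i(x_i,x_{-i})\neq\emptyset$ implies $x_i\notin S_i$. $G\to^*H$ means there is a finite or countably infinite sequence of pairings $R^0=G,R^1,\dots$ with $R^t\to R^{t+1}$ fast for each $t$ and $H_i=\bigcap_tR^t_i$ for each $i$. $H$ is a maximal $(\to^* )$-reduction of $G$ if $G\to^*H$ and, for pairings $H'$ with $H'_i\subseteq H_i$, $H\to H'$ holds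 only for $H'=H$. *)

theory Defs
  imports "HOL-Analysis.Analysis"
begin

definition lc_tvs :: "'v::real_vector topology \<Rightarrow> bool" where
  "lc_tvs T \<longleftrightarrow> topspace T = UNIV \<and> Hausdorff_space T
     \<and> continuous_map (prod_topology T T) T (\<lambda>(x, y). x + y)
     \<and> continuous_map (prod_topology euclideanreal T) T (\<lambda>(a, x). a *\<^sub>R x)
     \<and> (\<forall>U x. openin T U \<and> x \<in> U \<longrightarrow> (\<exists>V. openin T V \<and> convex V \<and> x \<in> V \<and> V \<subseteq> U))"

text \<open>Profiles are functions 'i => 'v; (x_i, x_{-i}) is written z(i := xi) with
  z in PiE (I - {i}) H (the profile of the other players).\<close>

definition property_T :: "'i set \<Rightarrow> ('i \<Rightarrow> 'v set) \<Rightarrow> ('i \<Rightarrow> ('i \<Rightarrow> 'v) \<Rightarrow> 'v set)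
    \<Rightarrow> ('i \<Rightarrow> ('i \<Rightarrow> 'v) \<Rightarrow> 'v set) \<Rightarrow> bool" where
  "property_T I G P Q \<longleftrightarrow> (\<forall>i\<in>I. \<forall>x\<in>PiE I G. P i x \<subseteq> Q i x \<and>
      (\<forall>y\<in>P i x. Q i (x(i := y)) \<subseteq> P i x))"

definition succ_H :: "'i set \<Rightarrow> ('i \<Rightarrow> ('i \<Rightarrow> 'v) \<Rightarrow> 'v set) \<Rightarrow> ('i \<Rightarrow> 'v set)
    \<Rightarrow> 'i \<Rightarrow> 'v \<Rightarrow> 'v \<Rightarrow> bool" where
  "succ_H I P H i y x \<longleftrightarrow> PiE (I - {i}) H \<noteq> {} \<and>
      (\<forall>z\<in>PiE (I - {i}) H. y \<in> P i (z(i := x)))"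

definition dominated :: "'i set \<Rightarrow> ('i \<Rightarrow> 'v set) \<Rightarrow> ('i \<Rightarrow> ('i \<Rightarrow> 'v) \<Rightarrow> 'v set)
    \<Rightarrow> ('i \<Rightarrow> 'v set) \<Rightarrow> 'i \<Rightarrow> 'v \<Rightarrow> bool" where
  "dominated I G P R i x \<longleftrightarrow> (G i \<inter> (\<Inter>z\<in>PiE (I - {i}) R. P i (z(i := x)))) \<noteq> {}"

definition red_step :: "'i set \<Rightarrow> ('i \<Rightarrow> 'v set) \<Rightarrow> ('i \<Rightarrow> ('i \<Rightarrow> 'v) \<Rightarrow> 'v set)
    \<Rightarrow> ('i \<Rightarrow> 'v set) \<Rightarrow> ('i \<Rightarrow> 'v set) \<Rightarrow> bool" where
  "red_step I G P R S \<longleftrightarrow> (\<forall>i\<in>I. S i \<subseteq> R i) \<and>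
      (\<forall>i\<in>I. \<forall>x\<in>R i - S i. dominated I G P R i x)"

definition fast_step :: "'i set \<Rightarrow> ('i \<Rightarrow> 'v set) \<Rightarrow> ('i \<Rightarrow> ('i \<Rightarrow> 'v) \<Rightarrow> 'v set)
    \<Rightarrow> ('i \<Rightarrow> 'v set) \<Rightarrow> ('i \<Rightarrow> 'v set) \<Rightarrow> bool" where
  "fast_step I G P R S \<longleftrightarrow> red_step I G P R S \<and>
      (\<forall>i\<in>I. \<forall>x\<in>R i. dominated I G P R i x \<longrightarrow> x \<notin> S i)"

definition red_star :: "'i set \<Rightarrow> ('i \<Rightarrow> 'v set) \<Rightarrow> ('i \<Rightarrow> ('i \<Rightarrow> 'v) \<Rightarrow> 'v set)
    \<Rightarrow> ('i \<Rightarrow> 'v set) \<Rightarrow> bool" where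
  "red_star I G P H \<longleftrightarrow> (\<exists>R :: nat \<Rightarrow> 'i \<Rightarrow> 'v set. (\<forall>i\<in>I. R 0 i = G i) \<and>
      ((\<exists>n. (\<forall>t<n. fast_step I G P (R t) (R (Suc t))) \<and> (\<forall>i\<in>I. H i = (\<Inter>t\<le>n. R t i)))
       \<or> ((\<forall>t. fast_step I G P (R t) (R (Suc t))) \<and> (\<forall>i\<in>I. H i = (\<Inter>t. R t i)))))"

definition maximal_red :: "'i set \<Rightarrow> ('i \<Rightarrow> 'v set) \<Rightarrow> ('i \<Rightarrow> ('i \<Rightarrow> 'v) \<Rightarrow> 'v set)
    \<Rightarrow> ('i \<Rightarrow> 'v set) \<Rightarrow> bool" where
  "maximal_red I G P H \<longleftrightarrow> red_star I G P H \<and>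
      (\<forall>H'. (\<forall>i\<in>I. H' i \<subseteq> H i) \<longrightarrow> red_step I G P H H' \<longrightarrow> (\<forall>i\<in>I. H' i = H i))"

end

theory Submission
  imports Defs
begin

text \<open>
  (a) Fix a player \<open>i\<close> and write \<open>b \<succ> a\<close> for \<open>b \<succ>\<^sub>H a\<close>. By (iv) \<open>\<succ>\<close> is irreflexive, and
  by (i), (ii) and property \<open>T\<close> the closed sets \<open>C b = \<Inter>{Q\<^sub>i(b, z\<^sub>-\<^sub>i) | z\<^sub>-\<^sub>i \<in> H\<^sub>-\<^sub>i}\<close>
  satisfy \<open>{w. w \<succ> b} \<subseteq> C b \<subseteq> {w. w \<succ> a}\<close> whenever \<open>b \<succ> a\<close>; in particular \<open>\<succ>\<close> is
  transitive. Along a chain without a largest element these sets decrease, so by compactness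
  of \<open>G\<^sub>i\<close> they have a common point, which lies strictly above the whole chain. Zorn's lemma
  then gives a \<open>\<succ>\<close>-maximal element above \<open>x\<^sub>i\<close>; being undominated, it is never removed by a
  fast reduction and so lies in \<open>H\<^sub>i\<close>.

  (b) A fast step removes exactly the dominated strategies, so every \<open>\<rightarrow>\<^sup>*\<close>-reduction of \<open>G\<close>
  is a term of the canonical sequence of iterated elimination or the intersection of all its
  terms. A maximal reduction is a fixed point of elimination, hence equals the intersection
  of the whole canonical sequence, which does not depend on the reduction.
\<close>

lemma compactin_chain_Inter_nonempty:
  assumes "compactin X S" and "chain\<^sub>\<subseteq> \<C>" and "\<C> \<noteq> {}"
    and "\<And>D. D \<in> \<C> \<Longrightarrow> closedin X D" and "\<And>D. D \<in> \<C> \<Longrightarrow> S \<inter> D \<noteq> {}"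
  shows "S \<inter> \<Inter>\<C> \<noteq> {}"
proof -
  have "S \<inter> \<Inter>\<F> \<noteq> {}" if "finite \<F>" "\<F> \<subseteq> \<C>" for \<F>
  proof (cases "\<F> = {}")
    case True
    then show ?thesis using assms(3,5) by blast
  next
    case False
    have "chain\<^sub>\<subseteq> \<F>" using assms(2) \<open>\<F> \<subseteq> \<C>\<close> unfolding chain_subset_def by blast
    then have "\<Inter>\<F> \<in> \<F>"
      using Inter_in_chain[OF \<open>finite \<F>\<close> False] by (simp add: chain_subset_alt_def)
    then show ?thesis using assms(5) \<open>\<F> \<subseteq> \<C>\<close> by blast
  qed
  with assms(1,4) show ?thesis
    unfolding compactin_fip by (elim conjE allE[of _ \<C>] impE) auto
qed

text \<open>\<open>succ b a\<close> reads ``\<open>b\<close> is strictly above \<open>a\<close>''.\<close>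

locale compact_succ_order =
  fixes X :: "'a topology" and S :: "'a set" and succ :: "'a \<Rightarrow> 'a \<Rightarrow> bool"
    and C :: "'a \<Rightarrow> 'a set"
  assumes compact: "compactin X S"
    and irrefl: "\<And>a. a \<in> S \<Longrightarrow> \<not> succ a a"
    and succ_in: "\<And>a b. a \<in> S \<Longrightarrow> succ b a \<Longrightarrow> b \<in> S"
    and closed: "\<And>b. b \<in> S \<Longrightarrow> closedin X (C b)"
    and self_in: "\<And>b. b \<in> S \<Longrightarrow> b \<in> C b"
    and C_succ: "\<And>a b w. a \<in> S \<Longrightarrow> succ b a \<Longrightarrow> w \<in> C b \<Longrightarrow> succ w a"
    and succ_C: "\<And>a w. a \<in> S \<Longrightarrow> succ w a \<Longrightarrow> w \<in> C a"
begin

lemma succ_trans: "a \<in> S \<Longrightarrow> succ b a \<Longrightarrow> succ c b \<Longrightarrow> succ c a"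
  using C_succ succ_C succ_in by blast

lemma C_antimono: "a \<in> S \<Longrightarrow> succ b a \<Longrightarrow> C b \<subseteq> C a"
  using C_succ succ_C by blast

lemma chain_has_strict_upper_bound:
  assumes "K \<subseteq> S" "K \<noteq> {}" and total: "\<And>a b. a \<in> K \<Longrightarrow> b \<in> K \<Longrightarrow> a = b \<or> succ a b \<or> succ b a"
    and unbounded: "\<And>a. a \<in> K \<Longrightarrow> \<exists>b\<in>K. succ b a"
  shows "\<exists>w\<in>S. \<forall>a\<in>K. succ w a"
proof -
  have "S \<inter> \<Inter>(C ` K) \<noteq> {}"
  proof (rule compactin_chain_Inter_nonempty[OF compact])
    show "chain\<^sub>\<subseteq> (C ` K)"
      unfolding chain_subset_def using total C_antimono \<open>K \<subseteq> S\<close> by blast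
    show "C ` K \<noteq> {}" using \<open>K \<noteq> {}\<close> by blast
    show "closedin X D" if "D \<in> C ` K" for D using that closed \<open>K \<subseteq> S\<close> by blast
    show "S \<inter> D \<noteq> {}" if "D \<in> C ` K" for D using that self_in \<open>K \<subseteq> S\<close> by blast
  qed
  then obtain w where "w \<in> S" "\<And>b. b \<in> K \<Longrightarrow> w \<in> C b" by blast
  moreover have "succ w a" if "a \<in> K" for a
    using unbounded[OF that] C_succ \<open>K \<subseteq> S\<close> that calculation(2) by blast
  ultimately show ?thesis by blast
qed

theorem exists_maximal_above:
  assumes x: "x \<in> S" and y: "succ y x"
  shows "\<exists>m\<in>S. succ m x \<and> (\<forall>z. \<not> succ z m)"
proof -
  define A where "A = {w \<in> S. succ w x}"
  define le where "le a b \<longleftrightarrow> a = b \<or> succ b a" for a b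
  have "partial_order_on A (relation_of le A)"
    unfolding partial_order_on_def preorder_on_def refl_on_def trans_def antisym_def
      relation_of_def le_def A_def
    using succ_trans irrefl by auto
  moreover have "\<exists>u\<in>A. \<forall>a\<in>K. le a u" if "K \<in> Chains (relation_of le A)" for K
  proof -
    have KA: "K \<subseteq> A" and total: "\<And>a b. a \<in> K \<Longrightarrow> b \<in> K \<Longrightarrow> le a b \<or> le b a"
      using that unfolding Chains_def relation_of_def by auto
    consider "K = {}" | "\<exists>m\<in>K. \<forall>a\<in>K. le a m" | "K \<noteq> {}" "\<And>a. a \<in> K \<Longrightarrow> \<exists>b\<in>K. succ b a"
      using total unfolding le_def by blast
    then show ?thesis
    proof cases
      case 1
      then show ?thesis using x y succ_in unfolding A_def by auto
    next
      case 2
      then show ?thesis using KA by blast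
    next
      case 3
      moreover have "K \<subseteq> S" using KA unfolding A_def by blast
      ultimately obtain w where w: "w \<in> S" "\<forall>a\<in>K. succ w a"
        using chain_has_strict_upper_bound total unfolding le_def by blast
      obtain a where "a \<in> K" using 3 by blast
      then have "w \<in> A" using w succ_trans x KA unfolding A_def by blast
      then show ?thesis using w(2) unfolding le_def by blast
    qed
  qed
  ultimately obtain m where m: "m \<in> A" "\<And>a. a \<in> A \<Longrightarrow> le m a \<Longrightarrow> a = m"
    using predicate_Zorn by metis
  have "\<not> succ z m" for z
  proof
    assume "succ z m"
    then have "z \<in> A" using m(1) succ_trans x succ_in unfolding A_def by blast
    then show False using m \<open>succ z m\<close> irrefl unfolding le_def A_def by blast
  qed
  then show ?thesis using m(1) unfolding A_def by blast
qed

end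

lemma fun_upd_in_PiE_Diff:
  assumes "z \<in> PiE (I - {i}) H" "\<forall>j\<in>I. H j \<subseteq> G j" "i \<in> I" "a \<in> G i"
  shows "z(i := a) \<in> PiE I G"
  using assms by (fastforce simp: PiE_iff extensional_def)

lemma succ_H_exists_maximal_above:
  assumes i: "i \<in> I" and HG: "\<forall>j\<in>I. H j \<subseteq> G j"
    and compact: "compactin X (G i)"
    and P_sub: "\<And>x. x \<in> PiE I G \<Longrightarrow> P i x \<subseteq> G i"
    and P_Q: "\<And>x. x \<in> PiE I G \<Longrightarrow> P i x \<subseteq> Q i x"
    and Q_P: "\<And>x y. x \<in> PiE I G \<Longrightarrow> y \<in> P i x \<Longrightarrow> Q i (x(i := y)) \<subseteq> P i x"
    and Q_refl: "\<And>x y. x \<in> PiE I G \<Longrightarrow> y \<in> G i \<Longrightarrow> y \<in> Q i (x(i := y))"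
    and Q_closed: "\<And>x. x \<in> PiE I G \<Longrightarrow> closedin X (Q i x)"
    and P_irrefl: "\<And>x. x \<in> PiE I G \<Longrightarrow> x i \<notin> P i x"
    and x: "x \<in> G i" and y: "succ_H I P H i y x"
  shows "\<exists>m\<in>G i. succ_H I P H i m x \<and> (\<forall>z. \<not> succ_H I P H i z m)"
proof -
  define Hm where "Hm = PiE (I - {i}) H"
  have Hm_ne: "Hm \<noteq> {}" using y unfolding succ_H_def Hm_def by simp
  then obtain z0 where z0: "z0 \<in> Hm" by blast
  have succ_iff: "succ_H I P H i b a \<longleftrightarrow> (\<forall>z\<in>Hm. b \<in> P i (z(i := a)))" for a b
    using Hm_ne unfolding succ_H_def Hm_def by simp
  have upd: "z(i := a) \<in> PiE I G" if "z \<in> Hm" "a \<in> G i" for z a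
    using that(1)[unfolded Hm_def] HG i that(2) by (rule fun_upd_in_PiE_Diff)
  interpret compact_succ_order X "G i" "succ_H I P H i" "\<lambda>b. \<Inter>z\<in>Hm. Q i (z(i := b))"
  proof
    show "compactin X (G i)" by (fact compact)
    show "\<not> succ_H I P H i a a" if "a \<in> G i" for a
    proof
      assume "succ_H I P H i a a"
      then have "a \<in> P i (z0(i := a))" using succ_iff z0 by blast
      then show False using P_irrefl[OF upd[OF z0 that]] by simp
    qed
    show "b \<in> G i" if "a \<in> G i" "succ_H I P H i b a" for a b
      using that(2) succ_iff z0 P_sub[OF upd[OF z0 that(1)]] by blast
    show "closedin X (\<Inter>z\<in>Hm. Q i (z(i := b)))" if "b \<in> G i" for b
      using Hm_ne Q_closed[OF upd[OF _ that]] by blast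
    show "b \<in> (\<Inter>z\<in>Hm. Q i (z(i := b)))" if "b \<in> G i" for b
      using Q_refl[OF upd[OF _ that] that] by simp
    show "succ_H I P H i w a"
      if "a \<in> G i" "succ_H I P H i b a" "w \<in> (\<Inter>z\<in>Hm. Q i (z(i := b)))" for a b w
    proof -
      have "w \<in> P i (z(i := a))" if "z \<in> Hm" for z
        using Q_P[OF upd[OF that \<open>a \<in> G i\<close>]] \<open>succ_H I P H i b a\<close> \<open>w \<in> _\<close> that succ_iff
        by fastforce
      then show ?thesis using succ_iff by blast
    qed
    show "w \<in> (\<Inter>z\<in>Hm. Q i (z(i := a)))" if "a \<in> G i" "succ_H I P H i w a" for a w
      using that(2) P_Q[OF upd[OF _ that(1)]] succ_iff by blast
  qed
  show ?thesis using exists_maximal_above[OF x y] .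
qed

lemma dominated_imp_succ_H:
  assumes "\<forall>j\<in>I. H j \<subseteq> R j" and "PiE (I - {i}) H \<noteq> {}" and "dominated I G P R i x"
  shows "\<exists>w\<in>G i. succ_H I P H i w x"
proof -
  obtain w where w: "w \<in> G i" "\<And>z. z \<in> PiE (I - {i}) R \<Longrightarrow> w \<in> P i (z(i := x))"
    using assms(3) unfolding dominated_def by blast
  have "PiE (I - {i}) H \<subseteq> PiE (I - {i}) R" using assms(1) by (intro PiE_mono) auto
  then have "succ_H I P H i w x" using w(2) assms(2) unfolding succ_H_def by (meson subsetD)
  then show ?thesis using w(1) by blast
qed

definition eliminate :: "'i set \<Rightarrow> ('i \<Rightarrow> 'v set) \<Rightarrow> ('i \<Rightarrow> ('i \<Rightarrow> 'v) \<Rightarrow> 'v set)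
    \<Rightarrow> ('i \<Rightarrow> 'v set) \<Rightarrow> 'i \<Rightarrow> 'v set" where
  "eliminate I G P R i = {x \<in> R i. \<not> dominated I G P R i x}"

primrec fast_reduction :: "'i set \<Rightarrow> ('i \<Rightarrow> 'v set) \<Rightarrow> ('i \<Rightarrow> ('i \<Rightarrow> 'v) \<Rightarrow> 'v set)
    \<Rightarrow> nat \<Rightarrow> 'i \<Rightarrow> 'v set" where
  "fast_reduction I G P 0 = G"
| "fast_reduction I G P (Suc t) = eliminate I G P (fast_reduction I G P t)"

lemma eliminate_cong:
  assumes "\<forall>j\<in>I. A j = B j" "i \<in> I"
  shows "eliminate I G P A i = eliminate I G P B i"
proof -
  have "PiE (I - {i}) A = PiE (I - {i}) B" using assms(1) by (intro PiE_cong) auto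
  then show ?thesis using assms unfolding eliminate_def dominated_def by simp
qed

lemma fast_step_imp_eliminate:
  "fast_step I G P R S \<Longrightarrow> i \<in> I \<Longrightarrow> S i = eliminate I G P R i"
  unfolding fast_step_def red_step_def eliminate_def by blast

lemma fast_steps_eq_fast_reduction:
  assumes "\<forall>i\<in>I. R 0 i = G i" "\<forall>t<n. fast_step I G P (R t) (R (Suc t))"
  shows "t \<le> n \<Longrightarrow> \<forall>i\<in>I. R t i = fast_reduction I G P t i"
proof (induction t)
  case (Suc t)
  then have IH: "\<forall>i\<in>I. R t i = fast_reduction I G P t i" by simp
  have step: "fast_step I G P (R t) (R (Suc t))" using assms(2) Suc.prems by simp
  show ?case
    using fast_step_imp_eliminate[OF step] eliminate_cong[OF IH] by simp
qed (use assms(1) in simp)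

lemma fast_reduction_antimono:
  "t \<le> t' \<Longrightarrow> fast_reduction I G P t' i \<subseteq> fast_reduction I G P t i"
  by (rule lift_Suc_antimono_le[where f = "\<lambda>t. fast_reduction I G P t i"])
    (auto simp: eliminate_def)

lemma INT_atMost_fast_reduction:
  "(\<Inter>t\<le>n. fast_reduction I G P t i) = fast_reduction I G P n i"
proof (rule antisym)
  show "(\<Inter>t\<le>n. fast_reduction I G P t i) \<subseteq> fast_reduction I G P n i"
    by (rule INT_lower) simp
  show "fast_reduction I G P n i \<subseteq> (\<Inter>t\<le>n. fast_reduction I G P t i)"
    by (rule INT_greatest) (simp add: fast_reduction_antimono)
qed

lemma red_star_cases:
  assumes "red_star I G P H"
  obtains n where "\<forall>i\<in>I. H i = fast_reduction I G P n i"
  | "\<forall>i\<in>I. H i = (\<Inter>t. fast_reduction I G P t i)"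
proof -
  obtain R where R0: "\<forall>i\<in>I. R 0 i = G i" and
    "(\<exists>n. (\<forall>t<n. fast_step I G P (R t) (R (Suc t))) \<and> (\<forall>i\<in>I. H i = (\<Inter>t\<le>n. R t i)))
     \<or> ((\<forall>t. fast_step I G P (R t) (R (Suc t))) \<and> (\<forall>i\<in>I. H i = (\<Inter>t. R t i)))"
    using assms unfolding red_star_def by (elim exE conjE) (rule that)
  then consider
      n where "\<forall>t<n. fast_step I G P (R t) (R (Suc t))" "\<forall>i\<in>I. H i = (\<Inter>t\<le>n. R t i)"
    | "\<forall>t. fast_step I G P (R t) (R (Suc t))" "\<forall>i\<in>I. H i = (\<Inter>t. R t i)"
    by (elim disjE exE conjE) (rule that; assumption)+
  then show ?thesis
  proof cases
    case (1 n)
    have "H i = fast_reduction I G P n i" if "i \<in> I" for i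
    proof -
      have "H i = (\<Inter>t\<le>n. R t i)" using 1(2) that by blast
      also have "\<dots> = (\<Inter>t\<le>n. fast_reduction I G P t i)"
        using fast_steps_eq_fast_reduction[where R = R and G = G, OF R0 1(1)] that by simp
      finally show ?thesis by (simp add: INT_atMost_fast_reduction)
    qed
    then show ?thesis using that(1) by blast
  next
    case 2
    have "R t i = fast_reduction I G P t i" if "i \<in> I" for t i
      using fast_steps_eq_fast_reduction[where R = R and G = G and n = t and t = t, OF R0] 2(1) that
      by simp
    then show ?thesis using that(2) 2(2) by simp
  qed
qed

lemma red_star_subset:
  assumes "red_star I G P H" "i \<in> I"
  shows "H i \<subseteq> G i"
proof -
  have "fast_reduction I G P t i \<subseteq> G i" for t
    using fast_reduction_antimono[of 0 t I G P i] by simp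
  with assms show ?thesis by (cases rule: red_star_cases) blast+
qed

lemma undominated_in_red_star:
  assumes "red_star I G P H" "i \<in> I" "x \<in> G i" "PiE (I - {i}) H \<noteq> {}"
    and "\<forall>z\<in>G i. \<not> succ_H I P H i z x"
  shows "x \<in> H i"
proof -
  have survives: "\<forall>j\<in>I. H j \<subseteq> fast_reduction I G P t j \<Longrightarrow> x \<in> fast_reduction I G P t i" for t
  proof (induction t)
    case (Suc t)
    have H_sub: "\<forall>j\<in>I. H j \<subseteq> fast_reduction I G P t j"
      using Suc.prems by (auto simp: eliminate_def)
    then have "x \<in> fast_reduction I G P t i" by (rule Suc.IH)
    moreover have "\<not> dominated I G P (fast_reduction I G P t) i x"
      using dominated_imp_succ_H[OF H_sub assms(4)] assms(5) by blast
    ultimately show ?case by (simp add: eliminate_def)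
  qed (use assms(3) in simp)
  show ?thesis using assms(1)
  proof (cases rule: red_star_cases)
    case (1 n)
    then show ?thesis using survives[of n] assms(2) by simp
  next
    case 2
    then show ?thesis using survives assms(2) by blast
  qed
qed

lemma maximal_red_eliminate:
  assumes "maximal_red I G P H" "i \<in> I"
  shows "eliminate I G P H i = H i"
proof -
  have "\<forall>H'. (\<forall>i\<in>I. H' i \<subseteq> H i) \<longrightarrow> red_step I G P H H' \<longrightarrow> (\<forall>i\<in>I. H' i = H i)"
    using assms(1) unfolding maximal_red_def by (rule conjunct2)
  moreover have "\<forall>i\<in>I. eliminate I G P H i \<subseteq> H i" by (simp add: eliminate_def)
  moreover have "red_step I G P H (eliminate I G P H)"
    unfolding red_step_def eliminate_def by auto
  ultimately show ?thesis using assms(2) by blast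
qed

lemma maximal_red_eq_Inter_fast_reduction:
  assumes "maximal_red I G P H" "i \<in> I"
  shows "H i = (\<Inter>t. fast_reduction I G P t i)"
  using assms(1)[unfolded maximal_red_def, THEN conjunct1]
proof (cases rule: red_star_cases)
  case (1 n)
  have stable: "\<forall>j\<in>I. fast_reduction I G P (n + k) j = H j" for k
  proof (induction k)
    case (Suc k)
    then show ?case
      using eliminate_cong[OF Suc.IH] maximal_red_eliminate[OF assms(1)] by simp
  qed (use 1 in simp)
  have "H i \<subseteq> fast_reduction I G P t i" for t
  proof (cases "t \<le> n")
    case True
    then show ?thesis using fast_reduction_antimono[OF True] 1 assms(2) by simp
  next
    case False
    then show ?thesis using stable[of "t - n"] assms(2) by simp
  qed
  then show ?thesis using 1 assms(2) by blast
next
  case 2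
  then show ?thesis using assms(2) by simp
qed

theorem corollary3:
  fixes I :: "'i set" and T :: "'i \<Rightarrow> 'v::real_vector topology"
    and G :: "'i \<Rightarrow> 'v set" and P Q :: "'i \<Rightarrow> ('i \<Rightarrow> 'v) \<Rightarrow> 'v set"
  assumes I_ne: "I \<noteq> {}"
    and tvs: "\<forall>i\<in>I. lc_tvs (T i)"
    and cpt: "\<forall>i\<in>I. compactin (T i) (G i) \<and> convex (G i)"
    and corr: "\<forall>i\<in>I. \<forall>x\<in>PiE I G. P i x \<subseteq> G i \<and> Q i x \<subseteq> G i"
    and propT: "property_T I G P Q"
    and c1: "\<forall>i\<in>I. \<forall>y\<in>G i. \<forall>x\<in>PiE I G. y \<in> Q i (x(i := y))"
    and c2: "\<forall>i\<in>I. \<forall>x\<in>PiE I G. convex (Q i x) \<and> closedin (T i) (Q i x)"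
    and c3: "\<forall>i\<in>I. \<forall>x\<in>PiE I G. convex (P i x)"
    and c4: "\<forall>i\<in>I. \<forall>x\<in>PiE I G. x i \<notin> P i x"
    and c5: "\<forall>i\<in>I. \<forall>y\<in>G i. openin (product_topology (\<lambda>j. subtopology (T j) (G j)) I)
                                  {x \<in> PiE I G. y \<in> P i x}"
  shows "(\<forall>H i x y. red_star I G P H \<and> i \<in> I \<and> x \<in> G i \<and> y \<in> G i \<and> succ_H I P H i y x
            \<longrightarrow> (\<exists>xs\<in>H i. succ_H I P H i xs x \<and> (\<forall>z\<in>G i. \<not> succ_H I P H i z xs)))
       \<and> (\<forall>M. maximal_red I G P M \<and> (\<forall>i\<in>I. M i \<noteq> {})
            \<longrightarrow> (\<forall>M'. maximal_red I G P M' \<longrightarrow> (\<forall>i\<in>I. M' i = M i)))"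
proof (intro conjI allI impI)
  fix H i x y
  assume "red_star I G P H \<and> i \<in> I \<and> x \<in> G i \<and> y \<in> G i \<and> succ_H I P H i y x"
  then have H: "red_star I G P H" and i: "i \<in> I" and x: "x \<in> G i" and y: "succ_H I P H i y x"
    by auto
  have HG: "\<forall>j\<in>I. H j \<subseteq> G j" using red_star_subset[OF H] by blast
  have "\<exists>m\<in>G i. succ_H I P H i m x \<and> (\<forall>z. \<not> succ_H I P H i z m)"
  proof (rule succ_H_exists_maximal_above[OF i HG _ _ _ _ _ _ _ x y])
    show "compactin (T i) (G i)" using cpt i by blast
    fix z assume z: "z \<in> PiE I G"
    show "P i z \<subseteq> G i" using corr i z by blast
    show "P i z \<subseteq> Q i z" using propT i z unfolding property_T_def by blast
    show "Q i (z(i := b)) \<subseteq> P i z" if "b \<in> P i z" for b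
      using propT i z that unfolding property_T_def by blast
    show "b \<in> Q i (z(i := b))" if "b \<in> G i" for b using c1 i z that by blast
    show "closedin (T i) (Q i z)" using c2 i z by blast
    show "z i \<notin> P i z" using c4 i z by blast
  qed
  then obtain m where m: "m \<in> G i" "succ_H I P H i m x" "\<forall>z. \<not> succ_H I P H i z m" by blast
  have "PiE (I - {i}) H \<noteq> {}" using y unfolding succ_H_def by simp
  then have "m \<in> H i" using undominated_in_red_star[OF H i m(1)] m(3) by blast
  then show "\<exists>xs\<in>H i. succ_H I P H i xs x \<and> (\<forall>z\<in>G i. \<not> succ_H I P H i z xs)"
    using m by blast
next
  fix M M'
  assume "maximal_red I G P M \<and> (\<forall>i\<in>I. M i \<noteq> {})" and M': "maximal_red I G P M'"
  then have M: "maximal_red I G P M" by blast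
  show "\<forall>i\<in>I. M' i = M i"
    using maximal_red_eq_Inter_fast_reduction[OF M] maximal_red_eq_Inter_fast_reduction[OF M']
    by simp
qed

end
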